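(* Let $V\subset\mathbb{R}^d$ be the closure of a bounded domain. Then $(\mathscr{S}_V,d)$ is a complete metric space. If in addition $V$ is convex, then $(\mathscr{S}_V,d)$ is separable.
   Context: $\mathscr{C}_V:=\{h\delta_\gamma\in\mathcal{M}(V):h\ge0,\ \gamma\in V\}$. $d_F(\rho^1,\rho^2):=\sup\{\int_V\varphi\,d(\rho^1-\rho^2):\varphi\in C(V),\ \|\varphi\|_\infty\le1,\ \mathrm{Lip}(\varphi)\le1\}$. $\mathscr{S}_V$ is the set of narrowly continuous curves $t\mapsto\rho_t\in\mathcal{M}^+(V)$, $t\in[0,1]$, with $\rho_t\in\mathscr{C}_V$ for all $t$; narrow continuity means continuity of $t\mapsto\int_V\varphi\,d\rho_t$ for all $\varphi\in C(V)$. $d(\rho^1,\rho^2):=\sup_{t\in[0,1]}d_F(\rho^1_t,\rho^2_t)$. *)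

theory Defs
  imports "HOL-Analysis.Analysis" "HOL-Probability.Probability"
begin

definition meas_V :: "'a::euclidean_space set \<Rightarrow> 'a measure" where
  "meas_V V = restrict_space borel V"

definition CV :: "'a::euclidean_space set \<Rightarrow> 'a measure set" where
  "CV V = {scale_measure (ennreal h) (return (meas_V V) \<gamma>) | h \<gamma>. h \<ge> 0 \<and> \<gamma> \<in> V}"

definition flat_tests :: "'a::euclidean_space set \<Rightarrow> ('a \<Rightarrow> real) set" where
  "flat_tests V = {\<phi>. continuous_on V \<phi> \<and> (\<forall>x\<in>V. \<bar>\<phi> x\<bar> \<le> 1) \<and> 1-lipschitz_on V \<phi>}"

definition dF :: "'a::euclidean_space set \<Rightarrow> 'a measure \<Rightarrow> 'a measure \<Rightarrow> real" where
  "dF V \<rho>1 \<rho>2 = (SUP \<phi>\<in>flat_tests V. integral\<^sup>L \<rho>1 \<phi> - integral\<^sup>L \<rho>2 \<phi>)"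

definition narrowly_continuous :: "'a::euclidean_space set \<Rightarrow> (real \<Rightarrow> 'a measure) \<Rightarrow> bool" where
  "narrowly_continuous V \<rho> \<longleftrightarrow>
     (\<forall>\<phi>::'a \<Rightarrow> real. continuous_on V \<phi> \<longrightarrow> continuous_on {0..1} (\<lambda>t. integral\<^sup>L (\<rho> t) \<phi>))"

definition SV :: "'a::euclidean_space set \<Rightarrow> (real \<Rightarrow> 'a measure) set" where
  "SV V = {\<rho>. \<rho> \<in> extensional {0..1} \<and> (\<forall>t\<in>{0..1}. \<rho> t \<in> CV V) \<and> narrowly_continuous V \<rho>}"

definition dS :: "'a::euclidean_space set \<Rightarrow> (real \<Rightarrow> 'a measure) \<Rightarrow> (real \<Rightarrow> 'a measure) \<Rightarrow> real" where
  "dS V \<rho>1 \<rho>2 = (if \<rho>1 \<in> SV V \<and> \<rho>2 \<in> SV V then (SUP t\<in>{0..1}. dF V (\<rho>1 t) (\<rho>2 t)) else 0)"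

end

theory Submission
  imports Defs
begin

text \<open>Every element of \<open>C_V\<close> is \<open>h \<delta>_x\<close> and is determined by its moments \<open>(h, h x)\<close>.
  Testing against constants and against normalised linear functions shows that the moment map
  is a bi-Lipschitz bijection from \<open>(C_V, d_F)\<close> onto the cone \<open>K\<close> over \<open>{1} \<times> V\<close>, and
  narrow continuity of a curve in \<open>C_V\<close> is exactly continuity of its moment curve.  Hence
  \<open>(S_V, d)\<close> is bi-Lipschitz equivalent to the continuous curves \<open>[0,1] \<rightarrow> K\<close> with the
  uniform distance.  Completeness follows because \<open>K\<close> is closed; when \<open>V\<close> is convex so is
  \<open>K\<close>, and piecewise linear interpolations of finitely many points of a countable dense
  subset of \<open>K\<close> are dense.\<close>

text \<open>On \<open>[0,1]\<close>, \<open>hat n 0, \<dots>, hat n n\<close> are the tents of the piecewise linear partition of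
  unity with nodes \<open>j/n\<close>.\<close>
definition hat :: "nat \<Rightarrow> nat \<Rightarrow> real \<Rightarrow> real" where
  "hat n j t = min 1 (max 0 (real n * t - real j + 1)) - min 1 (max 0 (real n * t - real j))"

definition interpolate :: "nat \<Rightarrow> 'b::real_vector list \<Rightarrow> real \<Rightarrow> 'b" where
  "interpolate n qs t = (\<Sum>j<Suc n. hat n j t *\<^sub>R qs ! j)"

lemma hat_nonneg: "0 \<le> hat n j t"
  unfolding hat_def by auto

lemma sum_hat_eq_1:
  assumes "t \<in> {0..1}"
  shows "(\<Sum>j<Suc n. hat n j t) = 1"
proof -
  define f where "f j = min 1 (max 0 (real n * t - real j + 1))" for j :: nat
  have "(\<Sum>j<Suc n. hat n j t) = (\<Sum>j<Suc n. f j - f (Suc j))"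
    unfolding hat_def f_def by (intro sum.cong refl) (simp add: algebra_simps)
  also have "\<dots> = f 0 - f (Suc n)"
    by (rule sum_lessThan_telescope')
  also have "\<dots> = 1"
    using assms mult_left_mono[of t 1 "real n"] by (simp add: f_def)
  finally show ?thesis .
qed

lemma hat_nonzero_imp_near:
  assumes "n > 0" "hat n j t \<noteq> 0"
  shows "\<bar>t - real j / real n\<bar> < 1 / real n"
proof -
  have "\<bar>real n * t - real j\<bar> < 1"
    using assms(2) unfolding hat_def by (auto split: if_splits simp: min_def max_def)
  moreover have "t - real j / real n = (real n * t - real j) / real n"
    using assms(1) by (simp add: field_simps)
  ultimately show ?thesis
    using assms(1) by (simp add: abs_divide divide_strict_right_mono)
qed

lemma continuous_on_hat: "continuous_on S (hat n j)"
  unfolding hat_def by (intro continuous_intros)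

lemma continuous_on_interpolate:
  fixes qs :: "'b::real_normed_vector list"
  shows "continuous_on S (interpolate n qs)"
  unfolding interpolate_def by (intro continuous_intros continuous_on_hat)

lemma interpolate_in_convex:
  assumes "convex K" "length qs = Suc n" "set qs \<subseteq> K" "t \<in> {0..1}"
  shows "interpolate n qs t \<in> K"
  unfolding interpolate_def
proof (rule convex_sum[OF _ assms(1) sum_hat_eq_1[OF assms(4)] hat_nonneg])
  show "qs ! j \<in> K" if "j \<in> {..<Suc n}" for j
    using that assms(2,3) nth_mem[of j qs] by auto
qed simp

lemma dist_interpolate_le:
  fixes x :: "'b::real_normed_vector"
  assumes t: "t \<in> {0..1}"
    and near: "\<And>j. j < Suc n \<Longrightarrow> hat n j t \<noteq> 0 \<Longrightarrow> dist x (qs ! j) \<le> c"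
  shows "dist x (interpolate n qs t) \<le> c"
proof -
  have "x - interpolate n qs t = (\<Sum>j<Suc n. hat n j t *\<^sub>R (x - qs ! j))"
    using sum_hat_eq_1[OF t, of n]
    by (simp add: interpolate_def scaleR_diff_right sum_subtractf flip: scaleR_sum_left)
  then have "dist x (interpolate n qs t) \<le> (\<Sum>j<Suc n. norm (hat n j t *\<^sub>R (x - qs ! j)))"
    unfolding dist_norm by (metis norm_sum)
  also have "\<dots> = (\<Sum>j<Suc n. hat n j t * dist x (qs ! j))"
    by (simp add: dist_norm hat_nonneg)
  also have "\<dots> \<le> (\<Sum>j<Suc n. hat n j t * c)"
    using near hat_nonneg by (intro sum_mono) (fastforce intro: mult_left_mono)
  also have "\<dots> = c"
    using sum_hat_eq_1[OF t] by (simp flip: sum_distrib_right)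
  finally show ?thesis .
qed

lemma uniform_approximation_by_interpolation:
  fixes g :: "real \<Rightarrow> 'b::real_normed_vector"
  assumes g: "continuous_on {0..1} g" and dense: "g ` {0..1} \<subseteq> closure Q" and e: "e > 0"
  obtains n qs where "length qs = Suc n" "set qs \<subseteq> Q"
    "\<And>t. t \<in> {0..1} \<Longrightarrow> dist (g t) (interpolate n qs t) \<le> e"
proof -
  obtain \<delta> where \<delta>: "\<delta> > 0"
    "\<And>s t. s \<in> {0..1} \<Longrightarrow> t \<in> {0..1} \<Longrightarrow> dist t s < \<delta> \<Longrightarrow> dist (g t) (g s) < e / 2"
    using compact_uniformly_continuous[OF g compact_Icc] half_gt_zero[OF e]
    unfolding uniformly_continuous_on_def by metis
  obtain n :: nat where n: "n > 0" "1 / real n < \<delta>"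
    using reals_Archimedean[OF \<delta>(1)] by (metis inverse_eq_divide of_nat_0_less_iff zero_less_Suc)
  have node: "real j / real n \<in> {0..1}" if "j \<le> n" for j
    using that n by (auto simp: divide_le_eq_1)
  have "\<forall>j\<in>{..n}. \<exists>q. q \<in> Q \<and> dist q (g (real j / real n)) < e / 2"
  proof
    fix j assume "j \<in> {..n}"
    then have "g (real j / real n) \<in> closure Q"
      using dense node by auto
    then show "\<exists>q. q \<in> Q \<and> dist q (g (real j / real n)) < e / 2"
      using half_gt_zero[OF e] unfolding closure_approachable by blast
  qed
  then obtain q where q: "\<And>j. j \<le> n \<Longrightarrow> q j \<in> Q \<and> dist (q j) (g (real j / real n)) < e / 2"
    using bchoice[of "{..n}"] by (metis atMost_iff)
  define qs where "qs = map q [0..<Suc n]"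
  have qs: "length qs = Suc n" "set qs \<subseteq> Q"
    using q by (auto simp: qs_def simp del: upt_Suc)
  moreover have "dist (g t) (interpolate n qs t) \<le> e" if t: "t \<in> {0..1}" for t
  proof (rule dist_interpolate_le[OF t])
    fix j assume j: "j < Suc n" "hat n j t \<noteq> 0"
    then have "dist t (real j / real n) < \<delta>"
      using hat_nonzero_imp_near[OF n(1) j(2)] n(2) by (simp add: dist_real_def)
    then have "dist (g t) (g (real j / real n)) < e / 2"
      using \<delta>(2) t node j by simp
    moreover have "qs ! j = q j"
      using j by (simp add: qs_def del: upt_Suc)
    ultimately show "dist (g t) (qs ! j) \<le> e"
      using q[of j] j dist_triangle2[of "g t" "q j" "g (real j / real n)"] by simp
  qed
  ultimately show ?thesis using that by blast
qed

lemma integral_scale_return: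
  fixes f :: "'a \<Rightarrow> 'b::{banach,second_countable_topology}"
  assumes "h \<ge> 0" "x \<in> space M" "f \<in> borel_measurable M"
  shows "integral\<^sup>L (scale_measure (ennreal h) (return M x)) f = h *\<^sub>R f x"
proof -
  have "scale_measure (ennreal h) (return M x) = density (return M x) (\<lambda>_. ennreal h)"
    by (rule measure_eqI) (auto simp: emeasure_density_const)
  then show ?thesis
    using assms by (simp add: integral_density integral_return)
qed

lemma space_meas_V [simp]: "space (meas_V V) = V"
  by (simp add: meas_V_def space_restrict_space)

lemma continuous_on_imp_measurable_meas_V:
  "continuous_on V f \<Longrightarrow> f \<in> borel_measurable (meas_V V)"
  unfolding meas_V_def by (rule borel_measurable_continuous_on_restrict)

lemma flat_tests_abs_le: "\<phi> \<in> flat_tests V \<Longrightarrow> x \<in> V \<Longrightarrow> \<bar>\<phi> x\<bar> \<le> 1"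
  unfolding flat_tests_def by blast

lemma flat_tests_dist_le: "\<phi> \<in> flat_tests V \<Longrightarrow> x \<in> V \<Longrightarrow> y \<in> V \<Longrightarrow> dist (\<phi> x) (\<phi> y) \<le> dist x y"
  unfolding flat_tests_def using lipschitz_onD[of 1 V \<phi> x y] by auto

lemma flat_tests_continuous_on: "\<phi> \<in> flat_tests V \<Longrightarrow> continuous_on V \<phi>"
  unfolding flat_tests_def by blast

lemma uminus_in_flat_tests: "\<phi> \<in> flat_tests V \<Longrightarrow> (\<lambda>x. - \<phi> x) \<in> flat_tests V"
  unfolding flat_tests_def lipschitz_on_def
  by (auto intro: continuous_intros simp: dist_norm abs_minus_commute)

lemma const_in_flat_tests: "\<bar>c\<bar> \<le> 1 \<Longrightarrow> (\<lambda>_. c) \<in> flat_tests V"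
  unfolding flat_tests_def lipschitz_on_def by auto

lemma SV_extensional: "\<rho> \<in> SV V \<Longrightarrow> \<rho> \<in> extensional {0..1}"
  unfolding SV_def by blast

lemma SV_in_CV: "\<rho> \<in> SV V \<Longrightarrow> t \<in> {0..1} \<Longrightarrow> \<rho> t \<in> CV V"
  unfolding SV_def by blast

locale dirac_cone =
  fixes V :: "'a::euclidean_space set" and R :: real
  assumes compact: "compact V" and nonempty: "V \<noteq> {}"
    and R_pos: "R > 0" and norm_le_R: "\<And>x. x \<in> V \<Longrightarrow> norm x \<le> R"
begin

definition dirac :: "real \<Rightarrow> 'a \<Rightarrow> 'a measure" where
  "dirac h x = scale_measure (ennreal h) (return (meas_V V) x)"

definition moments :: "'a measure \<Rightarrow> real \<times> 'a" where
  "moments \<mu> = (integral\<^sup>L \<mu> (\<lambda>_. 1), integral\<^sup>L \<mu> (\<lambda>x. x))"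

definition moment_cone :: "(real \<times> 'a) set" where
  "moment_cone = conic hull ({1} \<times> V)"

text \<open>Recovers \<open>x\<close> from the moments \<open>(h, h x)\<close> of \<open>h \<delta>_x\<close>; for \<open>h = 0\<close> any point of \<open>V\<close> will do.\<close>
definition position :: "real \<times> 'a \<Rightarrow> 'a" where
  "position p = (if fst p = 0 then (SOME x. x \<in> V) else snd p /\<^sub>R fst p)"

definition of_moments :: "real \<times> 'a \<Rightarrow> 'a measure" where
  "of_moments p = dirac (fst p) (position p)"

lemma position_eq: "fst p \<noteq> 0 \<Longrightarrow> position p = snd p /\<^sub>R fst p"
  by (simp add: position_def)

lemma integral_dirac:
  fixes f :: "'a \<Rightarrow> 'b::{banach,second_countable_topology}"
  assumes "h \<ge> 0" "x \<in> V" "continuous_on V f"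
  shows "integral\<^sup>L (dirac h x) f = h *\<^sub>R f x"
  unfolding dirac_def
  using assms by (simp add: integral_scale_return continuous_on_imp_measurable_meas_V)

lemma CV_eq: "CV V = {dirac h x | h x. h \<ge> 0 \<and> x \<in> V}"
  unfolding CV_def dirac_def ..

lemma CV_E:
  assumes "\<mu> \<in> CV V"
  obtains h x where "h \<ge> 0" "x \<in> V" "\<mu> = dirac h x"
  using assms unfolding CV_eq by blast

lemma moments_dirac: "h \<ge> 0 \<Longrightarrow> x \<in> V \<Longrightarrow> moments (dirac h x) = (h, h *\<^sub>R x)"
  using integral_dirac[of h x "\<lambda>_. 1::real"] integral_dirac[of h x "\<lambda>x. x"]
  by (simp add: moments_def continuous_on_id)

lemma dirac_zero: "dirac 0 x = dirac 0 y"
  unfolding dirac_def by (simp add: null_measure_def space_return sets_return)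

lemma moment_cone_eq: "moment_cone = {(h, h *\<^sub>R x) | h x. h \<ge> 0 \<and> x \<in> V}"
  unfolding moment_cone_def conic_hull_explicit by auto

lemma closed_moment_cone: "closed moment_cone"
  unfolding moment_cone_def using compact
  by (intro closed_conic_hull disjI2 conjI compact_Times) (auto simp: zero_prod_def)

lemma convex_moment_cone: "convex V \<Longrightarrow> convex moment_cone"
  unfolding moment_cone_def by (intro convex_conic_hull convex_Times) auto

lemma moment_cone_position:
  assumes "p \<in> moment_cone"
  shows "fst p \<ge> 0" "position p \<in> V" "snd p = fst p *\<^sub>R position p"
  using assms nonempty by (auto simp: moment_cone_eq position_def some_in_eq)

lemma of_moments_dirac: "h \<ge> 0 \<Longrightarrow> x \<in> V \<Longrightarrow> of_moments (h, h *\<^sub>R x) = dirac h x"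
  unfolding of_moments_def position_def using dirac_zero by auto

lemma moments_in_cone: "\<mu> \<in> CV V \<Longrightarrow> moments \<mu> \<in> moment_cone"
  by (auto elim!: CV_E simp: moments_dirac moment_cone_eq)

lemma of_moments_in_CV: "p \<in> moment_cone \<Longrightarrow> of_moments p \<in> CV V"
  unfolding of_moments_def CV_eq using moment_cone_position by blast

lemma of_moments_moments: "\<mu> \<in> CV V \<Longrightarrow> of_moments (moments \<mu>) = \<mu>"
  by (auto elim!: CV_E simp: moments_dirac of_moments_dirac)

lemma moments_of_moments: "p \<in> moment_cone \<Longrightarrow> moments (of_moments p) = p"
  by (auto simp: moment_cone_eq moments_dirac of_moments_dirac)

lemma integral_of_moments:
  "p \<in> moment_cone \<Longrightarrow> continuous_on V \<phi> \<Longrightarrow> integral\<^sup>L (of_moments p) \<phi> = fst p * \<phi> (position p)"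
  using moment_cone_position[of p] by (simp add: of_moments_def integral_dirac)

lemma scaled_inner_in_flat_tests:
  assumes u: "norm u = 1"
  shows "(\<lambda>z. (z \<bullet> u) / (1 + R)) \<in> flat_tests V"
proof -
  have "\<bar>z \<bullet> u\<bar> / (1 + R) \<le> 1" if "z \<in> V" for z
  proof -
    have "\<bar>z \<bullet> u\<bar> \<le> norm z"
      using Cauchy_Schwarz_ineq2[of z u] u by simp
    also have "\<dots> \<le> 1 + R"
      using norm_le_R[OF that] by simp
    finally show ?thesis
      using R_pos by simp
  qed
  moreover have "1-lipschitz_on V (\<lambda>z. (z \<bullet> u) / (1 + R))"
  proof (rule lipschitz_onI)
    fix z w
    have "dist ((z \<bullet> u) / (1 + R)) ((w \<bullet> u) / (1 + R)) = \<bar>(z - w) \<bullet> u\<bar> / (1 + R)"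
      using R_pos by (simp add: dist_real_def inner_diff_left abs_divide flip: diff_divide_distrib)
    also have "\<dots> \<le> \<bar>(z - w) \<bullet> u\<bar>"
      using R_pos by (simp add: divide_le_eq mult_le_cancel_left1)
    also have "\<dots> \<le> 1 * dist z w"
      using Cauchy_Schwarz_ineq2[of "z - w" u] u by (simp add: dist_norm)
    finally show "dist ((z \<bullet> u) / (1 + R)) ((w \<bullet> u) / (1 + R)) \<le> 1 * dist z w" .
  qed simp
  ultimately show ?thesis
    unfolding flat_tests_def using R_pos by (auto intro!: continuous_intros simp: abs_divide)
qed

lemma flat_test_gap_le_moments:
  assumes \<phi>: "\<phi> \<in> flat_tests V" and "\<mu> \<in> CV V" "\<nu> \<in> CV V"
  shows "integral\<^sup>L \<mu> \<phi> - integral\<^sup>L \<nu> \<phi> \<le> (2 + R) * dist (moments \<mu>) (moments \<nu>)"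
proof -
  obtain h x k y where hx: "h \<ge> 0" "x \<in> V" "\<mu> = dirac h x" and ky: "k \<ge> 0" "y \<in> V" "\<nu> = dirac k y"
    using assms(2,3) by (elim CV_E)
  define D where "D = dist (h, h *\<^sub>R x) (k, k *\<^sub>R y)"
  have mass: "\<bar>h - k\<bar> \<le> D" and first: "norm (h *\<^sub>R x - k *\<^sub>R y) \<le> D"
    unfolding D_def dist_norm
    using norm_fst_le[of "h - k" "h *\<^sub>R x - k *\<^sub>R y"] norm_snd_le[of "h *\<^sub>R x - k *\<^sub>R y" "h - k"]
    by simp_all
  have "k * norm (x - y) = norm ((h *\<^sub>R x - k *\<^sub>R y) - (h - k) *\<^sub>R x)"
    using ky(1) by (simp add: algebra_simps flip: scaleR_diff_right)
  also have "\<dots> \<le> norm (h *\<^sub>R x - k *\<^sub>R y) + norm ((h - k) *\<^sub>R x)"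
    by (rule norm_triangle_ineq4)
  also have "norm ((h - k) *\<^sub>R x) \<le> \<bar>h - k\<bar> * R"
    using norm_le_R[OF hx(2)] by (simp add: mult_left_mono)
  finally have shift: "k * norm (x - y) \<le> norm (h *\<^sub>R x - k *\<^sub>R y) + \<bar>h - k\<bar> * R"
    by simp
  have "(h - k) * \<phi> x \<le> \<bar>h - k\<bar>"
    using mult_left_mono[OF flat_tests_abs_le[OF \<phi> hx(2)] abs_ge_zero[of "h - k"]]
      abs_ge_self[of "(h - k) * \<phi> x"] by (simp add: abs_mult)
  moreover have "k * (\<phi> x - \<phi> y) \<le> k * norm (x - y)"
    using flat_tests_dist_le[OF \<phi> hx(2) ky(2)] ky(1)
    by (intro mult_left_mono) (auto simp: dist_real_def dist_norm)
  moreover have "h * \<phi> x - k * \<phi> y = (h - k) * \<phi> x + k * (\<phi> x - \<phi> y)"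
    by (simp add: algebra_simps)
  ultimately have "h * \<phi> x - k * \<phi> y \<le> \<bar>h - k\<bar> + norm (h *\<^sub>R x - k *\<^sub>R y) + \<bar>h - k\<bar> * R"
    using shift by linarith
  also have "\<dots> \<le> D + D + D * R"
    using mass first R_pos by (intro add_mono mult_right_mono) auto
  finally have "h * \<phi> x - k * \<phi> y \<le> (2 + R) * D"
    by (simp add: algebra_simps)
  then show ?thesis
    using hx ky flat_tests_continuous_on[OF \<phi>] by (simp add: integral_dirac moments_dirac D_def)
qed

lemma dF_le_moments:
  assumes "\<mu> \<in> CV V" "\<nu> \<in> CV V"
  shows "dF V \<mu> \<nu> \<le> (2 + R) * dist (moments \<mu>) (moments \<nu>)"
  unfolding dF_def using const_in_flat_tests[of 0] flat_test_gap_le_moments[OF _ assms]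
  by (intro cSUP_least) auto

lemma integral_diff_le_dF:
  assumes "\<phi> \<in> flat_tests V" "\<mu> \<in> CV V" "\<nu> \<in> CV V"
  shows "integral\<^sup>L \<mu> \<phi> - integral\<^sup>L \<nu> \<phi> \<le> dF V \<mu> \<nu>"
  unfolding dF_def using assms(1) flat_test_gap_le_moments[OF _ assms(2,3)]
  by (intro cSUP_upper bdd_aboveI2) auto

text \<open>Constant tests detect the mass, normalised linear tests the first moment.\<close>
lemma moments_dist_le_dF:
  assumes "\<mu> \<in> CV V" "\<nu> \<in> CV V"
  shows "dist (moments \<mu>) (moments \<nu>) \<le> (2 + R) * dF V \<mu> \<nu>"
proof -
  obtain h x k y where hx: "h \<ge> 0" "x \<in> V" "\<mu> = dirac h x" and ky: "k \<ge> 0" "y \<in> V" "\<nu> = dirac k y"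
    using assms by (elim CV_E)
  define d where "d = dF V \<mu> \<nu>"
  have test: "h * \<phi> x - k * \<phi> y \<le> d" if "\<phi> \<in> flat_tests V" for \<phi>
    using integral_diff_le_dF[OF that assms] hx ky flat_tests_continuous_on[OF that]
    by (simp add: integral_dirac d_def)
  have mass: "\<bar>h - k\<bar> \<le> d"
    using test[OF const_in_flat_tests[of 1]] test[OF const_in_flat_tests[of "-1"]] by auto
  define w where "w = h *\<^sub>R x - k *\<^sub>R y"
  have first: "norm w \<le> (1 + R) * d"
  proof (cases "w = 0")
    case True
    then show ?thesis using mass R_pos by simp
  next
    case False
    define u where "u = w /\<^sub>R norm w"
    have "norm u = 1" using False by (simp add: u_def)
    from test[OF scaled_inner_in_flat_tests[OF this]]
    have "(w \<bullet> u) / (1 + R) \<le> d"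
      by (simp add: w_def inner_diff_left diff_divide_distrib)
    moreover have "w \<bullet> u = norm w"
      using False by (simp add: u_def dot_square_norm power2_eq_square)
    ultimately show ?thesis
      using R_pos by (simp add: divide_le_eq mult.commute)
  qed
  have "dist (moments \<mu>) (moments \<nu>) \<le> \<bar>h - k\<bar> + norm w"
    using hx ky norm_Pair_le[of "h - k" w] by (simp add: moments_dirac dist_norm w_def)
  also have "\<dots> \<le> (2 + R) * d"
    using mass first by (simp add: algebra_simps)
  finally show ?thesis by (simp add: d_def)
qed

lemma dF_nonneg: "\<mu> \<in> CV V \<Longrightarrow> \<nu> \<in> CV V \<Longrightarrow> 0 \<le> dF V \<mu> \<nu>"
  using order_trans[OF zero_le_dist moments_dist_le_dF] R_pos by (simp add: zero_le_mult_iff)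

lemma dF_self: "\<mu> \<in> CV V \<Longrightarrow> dF V \<mu> \<mu> = 0"
  using dF_le_moments[of \<mu> \<mu>] dF_nonneg[of \<mu> \<mu>] by simp

lemma dF_eq_0_imp_eq: "\<mu> \<in> CV V \<Longrightarrow> \<nu> \<in> CV V \<Longrightarrow> dF V \<mu> \<nu> = 0 \<Longrightarrow> \<mu> = \<nu>"
  using moments_dist_le_dF[of \<mu> \<nu>] by (metis of_moments_moments mult_zero_right zero_le_dist dist_le_zero_iff)

lemma dF_commute:
  assumes "\<mu> \<in> CV V" "\<nu> \<in> CV V"
  shows "dF V \<mu> \<nu> = dF V \<nu> \<mu>"
proof -
  have "dF V \<nu> \<mu> \<le> dF V \<mu> \<nu>" if "\<mu> \<in> CV V" "\<nu> \<in> CV V" for \<mu> \<nu>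
    unfolding dF_def[of V \<nu> \<mu>] using const_in_flat_tests[of 0]
    using integral_diff_le_dF[OF uminus_in_flat_tests that] by (intro cSUP_least) auto
  then show ?thesis using assms by (meson antisym)
qed

lemma dF_triangle:
  assumes "\<mu> \<in> CV V" "\<nu> \<in> CV V" "\<kappa> \<in> CV V"
  shows "dF V \<mu> \<kappa> \<le> dF V \<mu> \<nu> + dF V \<nu> \<kappa>"
  unfolding dF_def[of V \<mu> \<kappa>] using const_in_flat_tests[of 0]
  using integral_diff_le_dF[OF _ assms(1,2)] integral_diff_le_dF[OF _ assms(2,3)]
  by (intro cSUP_least) fastforce+

definition curve_of :: "(real \<Rightarrow> real \<times> 'a) \<Rightarrow> real \<Rightarrow> 'a measure" where
  "curve_of g = restrict (\<lambda>t. of_moments (g t)) {0..1}"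

lemma tendsto_mass_times_position_apex:
  assumes \<phi>: "continuous_on V \<phi>" and apex: "fst p = 0"
  shows "((\<lambda>q. fst q * \<phi> (position q)) \<longlongrightarrow> 0) (at p within moment_cone)"
proof -
  obtain B where B: "\<And>z. z \<in> V \<Longrightarrow> \<bar>\<phi> z\<bar> \<le> B"
    using compact_imp_bounded[OF compact_continuous_image[OF \<phi> compact]]
    unfolding bounded_iff by fastforce
  have "\<forall>\<^sub>F q in at p within moment_cone. q \<in> moment_cone"
    by (simp add: eventually_at_filter)
  then have bound: "\<forall>\<^sub>F q in at p within moment_cone. norm (fst q * \<phi> (position q)) \<le> B * \<bar>fst q\<bar>"
  proof eventually_elim
    case (elim q)
    then have "\<bar>\<phi> (position q)\<bar> \<le> B"
      using B moment_cone_position(2) by blast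
    then have "\<bar>\<phi> (position q)\<bar> * \<bar>fst q\<bar> \<le> B * \<bar>fst q\<bar>"
      by (rule mult_right_mono) simp
    then show ?case
      by (simp add: abs_mult mult.commute)
  qed
  have "(fst \<longlongrightarrow> fst p) (at p within moment_cone)"
    by (rule tendsto_fst[OF tendsto_ident_at])
  then have "(fst \<longlongrightarrow> 0) (at p within moment_cone)"
    using apex by simp
  then have "((\<lambda>q. B * \<bar>fst q\<bar>) \<longlongrightarrow> 0) (at p within moment_cone)"
    by (intro tendsto_mult_right_zero tendsto_rabs_zero)
  with bound show ?thesis
    by (rule Lim_null_comparison)
qed

lemma tendsto_mass_times_position_off_apex:
  assumes \<phi>: "continuous_on V \<phi>" and p: "p \<in> moment_cone" "fst p \<noteq> 0"
  shows "((\<lambda>q. fst q * \<phi> (position q)) \<longlongrightarrow> fst p * \<phi> (position p)) (at p within moment_cone)"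
proof -
  have fst: "(fst \<longlongrightarrow> fst p) (at p within moment_cone)"
    and snd: "(snd \<longlongrightarrow> snd p) (at p within moment_cone)"
    by (intro tendsto_fst tendsto_snd tendsto_ident_at)+
  have pos: "fst p > 0"
    using moment_cone_position(1)[OF p(1)] p(2) by simp
  have "\<forall>\<^sub>F q in at p within moment_cone. q \<in> moment_cone"
    by (simp add: eventually_at_filter)
  then have near: "\<forall>\<^sub>F q in at p within moment_cone. position q = snd q /\<^sub>R fst q \<and> position q \<in> V"
    using order_tendstoD(1)[OF fst pos]
    by eventually_elim (metis position_eq moment_cone_position(2) less_irrefl)
  have "((\<lambda>q. snd q /\<^sub>R fst q) \<longlongrightarrow> snd p /\<^sub>R fst p) (at p within moment_cone)"
    using pos by (intro tendsto_intros fst snd) auto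
  then have "((\<lambda>q. snd q /\<^sub>R fst q) \<longlongrightarrow> position p) (at p within moment_cone)"
    using p(2) by (simp add: position_eq)
  then have "((\<lambda>q. \<phi> (snd q /\<^sub>R fst q)) \<longlongrightarrow> \<phi> (position p)) (at p within moment_cone)"
    using near moment_cone_position(2)[OF p(1)]
    by (intro continuous_on_tendsto_compose[OF \<phi>]) (auto elim: eventually_mono)
  then have "((\<lambda>q. fst q * \<phi> (snd q /\<^sub>R fst q)) \<longlongrightarrow> fst p * \<phi> (position p)) (at p within moment_cone)"
    by (intro tendsto_mult fst)
  then show ?thesis
    by (rule Lim_transform_eventually) (use near in \<open>auto elim: eventually_mono\<close>)
qed

lemma continuous_on_mass_times_position:
  assumes "continuous_on V \<phi>"
  shows "continuous_on moment_cone (\<lambda>p. fst p * \<phi> (position p))"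
  unfolding continuous_on_def
proof
  fix p assume p: "p \<in> moment_cone"
  show "((\<lambda>q. fst q * \<phi> (position q)) \<longlongrightarrow> fst p * \<phi> (position p)) (at p within moment_cone)"
  proof (cases "fst p = 0")
    case True
    then show ?thesis
      using tendsto_mass_times_position_apex[OF assms] by simp
  next
    case False
    then show ?thesis
      by (rule tendsto_mass_times_position_off_apex[OF assms p])
  qed
qed

lemma curve_of_in_SV:
  assumes g: "continuous_on {0..1} g" and g_cone: "g ` {0..1} \<subseteq> moment_cone"
  shows "curve_of g \<in> SV V"
proof -
  have "continuous_on {0..1} (\<lambda>t. integral\<^sup>L (curve_of g t) \<phi>)"
    if \<phi>: "continuous_on V \<phi>" for \<phi> :: "'a \<Rightarrow> real"
  proof -
    have "continuous_on {0..1} ((\<lambda>p. fst p * \<phi> (position p)) \<circ> g)"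
      using g_cone continuous_on_mass_times_position[OF \<phi>]
      by (intro continuous_on_compose[OF g]) (auto elim: continuous_on_subset)
    then show ?thesis
    proof (rule continuous_on_eq)
      fix t :: real assume "t \<in> {0..1}"
      moreover have "g t \<in> moment_cone"
        using g_cone calculation by blast
      ultimately show "((\<lambda>p. fst p * \<phi> (position p)) \<circ> g) t = integral\<^sup>L (curve_of g t) \<phi>"
        by (simp add: curve_of_def integral_of_moments[OF _ \<phi>])
    qed
  qed
  then show ?thesis
    using g_cone of_moments_in_CV
    unfolding SV_def narrowly_continuous_def curve_of_def by (auto simp: image_subset_iff)
qed

lemma moments_curve_of: "t \<in> {0..1} \<Longrightarrow> g t \<in> moment_cone \<Longrightarrow> moments (curve_of g t) = g t"
  by (simp add: curve_of_def moments_of_moments)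

lemma continuous_on_moments_SV:
  assumes "\<rho> \<in> SV V"
  shows "continuous_on {0..1} (\<lambda>t. moments (\<rho> t))"
proof -
  have narrow: "\<And>\<phi>::'a \<Rightarrow> real. continuous_on V \<phi> \<Longrightarrow> continuous_on {0..1} (\<lambda>t. integral\<^sup>L (\<rho> t) \<phi>)"
    using assms unfolding SV_def narrowly_continuous_def by blast
  have mass: "continuous_on {0..1} (\<lambda>t. fst (moments (\<rho> t)))"
    using narrow[of "\<lambda>_. 1"] by (simp add: moments_def)
  have "continuous_on {0..1} (\<lambda>t. snd (moments (\<rho> t)) \<bullet> b)" for b :: 'a
  proof (rule continuous_on_eq[OF narrow[of "\<lambda>z. z \<bullet> b"]])
    fix t :: real assume "t \<in> {0..1}"
    then obtain h x where "h \<ge> 0" "x \<in> V" "\<rho> t = dirac h x"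
      using SV_in_CV[OF assms] CV_E by metis
    then show "integral\<^sup>L (\<rho> t) (\<lambda>z. z \<bullet> b) = snd (moments (\<rho> t)) \<bullet> b"
      by (simp add: integral_dirac moments_dirac continuous_intros)
  qed (intro continuous_intros)
  then have first: "continuous_on {0..1} (\<lambda>t. snd (moments (\<rho> t)))"
    using continuous_on_componentwise[of "{0..1}" "\<lambda>t. snd (moments (\<rho> t))"] by blast
  then show ?thesis
    using continuous_on_Pair[OF mass first] by simp
qed

lemma bdd_above_dF_SV:
  assumes "\<rho>1 \<in> SV V" "\<rho>2 \<in> SV V"
  shows "bdd_above ((\<lambda>t. dF V (\<rho>1 t) (\<rho>2 t)) ` {0..1})"
proof -
  have "bounded ((\<lambda>t. dist (moments (\<rho>1 t)) (moments (\<rho>2 t))) ` {0..1})"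
    using assms by (intro compact_imp_bounded compact_continuous_image continuous_on_dist
        continuous_on_moments_SV) auto
  then obtain B where B: "\<forall>t\<in>{0..1}. dist (moments (\<rho>1 t)) (moments (\<rho>2 t)) \<le> B"
    unfolding bounded_iff by auto
  show ?thesis
  proof (rule bdd_aboveI2)
    fix t :: real assume t: "t \<in> {0..1}"
    have "dF V (\<rho>1 t) (\<rho>2 t) \<le> (2 + R) * dist (moments (\<rho>1 t)) (moments (\<rho>2 t))"
      using dF_le_moments SV_in_CV assms t by blast
    also have "\<dots> \<le> (2 + R) * B"
      using B t R_pos by (intro mult_left_mono) auto
    finally show "dF V (\<rho>1 t) (\<rho>2 t) \<le> (2 + R) * B" .
  qed
qed

lemma dF_le_dS:
  assumes "\<rho>1 \<in> SV V" "\<rho>2 \<in> SV V" "t \<in> {0..1}"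
  shows "dF V (\<rho>1 t) (\<rho>2 t) \<le> dS V \<rho>1 \<rho>2"
  unfolding dS_def using assms bdd_above_dF_SV[OF assms(1,2)] by (auto intro: cSUP_upper)

lemma dS_le:
  assumes "\<rho>1 \<in> SV V" "\<rho>2 \<in> SV V" "\<And>t. t \<in> {0..1} \<Longrightarrow> dF V (\<rho>1 t) (\<rho>2 t) \<le> c"
  shows "dS V \<rho>1 \<rho>2 \<le> c"
  unfolding dS_def using assms by (auto intro!: cSUP_least)

lemma dS_le_moments:
  assumes "\<rho>1 \<in> SV V" "\<rho>2 \<in> SV V"
    and "\<And>t. t \<in> {0..1} \<Longrightarrow> dist (moments (\<rho>1 t)) (moments (\<rho>2 t)) \<le> c"
  shows "dS V \<rho>1 \<rho>2 \<le> (2 + R) * c"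
proof (rule dS_le[OF assms(1,2)])
  fix t :: real assume t: "t \<in> {0..1}"
  have "dF V (\<rho>1 t) (\<rho>2 t) \<le> (2 + R) * dist (moments (\<rho>1 t)) (moments (\<rho>2 t))"
    using dF_le_moments SV_in_CV assms(1,2) t by blast
  also have "\<dots> \<le> (2 + R) * c"
    using assms(3)[OF t] R_pos by (intro mult_left_mono) auto
  finally show "dF V (\<rho>1 t) (\<rho>2 t) \<le> (2 + R) * c" .
qed

lemma moments_dist_le_dS:
  assumes "\<rho>1 \<in> SV V" "\<rho>2 \<in> SV V" "t \<in> {0..1}"
  shows "dist (moments (\<rho>1 t)) (moments (\<rho>2 t)) \<le> (2 + R) * dS V \<rho>1 \<rho>2"
  using moments_dist_le_dF[OF SV_in_CV SV_in_CV] dF_le_dS[OF assms] assms R_pos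
  by (meson order_trans mult_left_mono add_nonneg_nonneg zero_le_numeral less_imp_le)

lemma dS_nonneg: "0 \<le> dS V \<rho>1 \<rho>2"
  using order_trans[OF zero_le_dist moments_dist_le_dS[of \<rho>1 \<rho>2 0]] R_pos
  by (auto simp: dS_def zero_le_mult_iff)

lemma dS_commute: "dS V \<rho>1 \<rho>2 = dS V \<rho>2 \<rho>1"
  unfolding dS_def using dF_commute SV_in_CV[of _ V] by (auto intro!: SUP_cong)

lemma dS_eq_0_iff:
  assumes "\<rho>1 \<in> SV V" "\<rho>2 \<in> SV V"
  shows "dS V \<rho>1 \<rho>2 = 0 \<longleftrightarrow> \<rho>1 = \<rho>2"
proof
  assume "dS V \<rho>1 \<rho>2 = 0"
  then have "\<rho>1 t = \<rho>2 t" if t: "t \<in> {0..1}" for t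
  proof -
    have "\<rho>1 t \<in> CV V" "\<rho>2 t \<in> CV V"
      using SV_in_CV assms t by blast+
    moreover have "dF V (\<rho>1 t) (\<rho>2 t) = 0"
      using dF_le_dS[OF assms t] dF_nonneg[OF calculation] \<open>dS V \<rho>1 \<rho>2 = 0\<close> by linarith
    ultimately show ?thesis
      by (rule dF_eq_0_imp_eq)
  qed
  then show "\<rho>1 = \<rho>2"
    by (rule extensionalityI[OF SV_extensional[OF assms(1)] SV_extensional[OF assms(2)]])
next
  assume "\<rho>1 = \<rho>2"
  then have "dS V \<rho>1 \<rho>2 \<le> 0"
    using assms by (intro dS_le) (simp_all add: dF_self SV_in_CV)
  then show "dS V \<rho>1 \<rho>2 = 0"
    using dS_nonneg antisym by blast
qed

lemma dS_triangle:
  assumes "\<rho>1 \<in> SV V" "\<rho>2 \<in> SV V" "\<rho>3 \<in> SV V"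
  shows "dS V \<rho>1 \<rho>3 \<le> dS V \<rho>1 \<rho>2 + dS V \<rho>2 \<rho>3"
proof (rule dS_le[OF assms(1,3)])
  fix t :: real assume t: "t \<in> {0..1}"
  have "dF V (\<rho>1 t) (\<rho>3 t) \<le> dF V (\<rho>1 t) (\<rho>2 t) + dF V (\<rho>2 t) (\<rho>3 t)"
    using dF_triangle SV_in_CV assms t by blast
  also have "\<dots> \<le> dS V \<rho>1 \<rho>2 + dS V \<rho>2 \<rho>3"
    using dF_le_dS assms t by (meson add_mono)
  finally show "dF V (\<rho>1 t) (\<rho>3 t) \<le> dS V \<rho>1 \<rho>2 + dS V \<rho>2 \<rho>3" .
qed

lemma Metric_space_SV: "Metric_space (SV V) (dS V)"
  by unfold_locales (auto simp: dS_nonneg dS_eq_0_iff intro: dS_commute dS_triangle)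

lemma uniformly_Cauchy_on_moments:
  assumes \<sigma>: "Metric_space.MCauchy (SV V) (dS V) \<sigma>"
  shows "uniformly_Cauchy_on {0..1} (\<lambda>n t. moments (\<sigma> n t))"
  unfolding uniformly_Cauchy_on_def
proof (intro allI impI)
  interpret SV: Metric_space "SV V" "dS V"
    by (rule Metric_space_SV)
  fix e :: real assume "e > 0"
  then have "e / (2 + R) > 0"
    using R_pos by simp
  then obtain N where N: "\<And>m n. N \<le> m \<Longrightarrow> N \<le> n \<Longrightarrow> dS V (\<sigma> m) (\<sigma> n) < e / (2 + R)"
    using \<sigma> unfolding SV.MCauchy_def by blast
  have "dist (moments (\<sigma> m t)) (moments (\<sigma> n t)) < e" if "t \<in> {0..1}" "N \<le> m" "N \<le> n" for t m n
  proof -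
    have "dist (moments (\<sigma> m t)) (moments (\<sigma> n t)) \<le> (2 + R) * dS V (\<sigma> m) (\<sigma> n)"
      using \<sigma> that(1) by (intro moments_dist_le_dS) (auto simp: SV.MCauchy_def)
    also have "\<dots> < e"
      using N[OF that(2,3)] R_pos by (simp add: less_divide_eq mult.commute)
    finally show ?thesis .
  qed
  then show "\<exists>M. \<forall>t\<in>{0..1}. \<forall>m\<ge>M. \<forall>n\<ge>M. dist (moments (\<sigma> m t)) (moments (\<sigma> n t)) < e"
    by blast
qed

lemma dS_curve_of_le:
  assumes \<rho>: "\<rho> \<in> SV V" and g: "continuous_on {0..1} g" "g ` {0..1} \<subseteq> moment_cone"
    and close: "\<And>t. t \<in> {0..1} \<Longrightarrow> dist (moments (\<rho> t)) (g t) \<le> c"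
  shows "dS V \<rho> (curve_of g) \<le> (2 + R) * c"
proof (rule dS_le_moments[OF \<rho> curve_of_in_SV[OF g]])
  fix t :: real assume t: "t \<in> {0..1}"
  then have "moments (curve_of g t) = g t"
    using g(2) by (intro moments_curve_of) auto
  then show "dist (moments (\<rho> t)) (moments (curve_of g t)) \<le> c"
    using close[OF t] by simp
qed

lemma mcomplete_SV: "Metric_space.mcomplete (SV V) (dS V)"
proof -
  interpret SV: Metric_space "SV V" "dS V"
    by (rule Metric_space_SV)
  have "\<exists>\<rho>. limitin SV.mtopology \<sigma> \<rho> sequentially" if \<sigma>: "SV.MCauchy \<sigma>" for \<sigma>
  proof -
    have \<sigma>_SV: "\<sigma> n \<in> SV V" for n
      using \<sigma> unfolding SV.MCauchy_def by blast
    obtain l where l: "uniform_limit {0..1} (\<lambda>n t. moments (\<sigma> n t)) l sequentially"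
      using Cauchy_uniformly_convergent[OF uniformly_Cauchy_on_moments[OF \<sigma>]]
      unfolding uniformly_convergent_on_def by blast
    have l_cont: "continuous_on {0..1} l"
      by (rule uniform_limit_theorem[OF always_eventually l])
        (simp_all add: \<sigma>_SV continuous_on_moments_SV)
    have l_cone: "l ` {0..1} \<subseteq> moment_cone"
    proof (rule image_subsetI)
      fix t :: real assume t: "t \<in> {0..1}"
      show "l t \<in> moment_cone"
        by (rule Lim_in_closed_set[OF closed_moment_cone _ _ tendsto_uniform_limitI[OF l t]])
          (simp_all add: moments_in_cone SV_in_CV[OF \<sigma>_SV t])
    qed
    have "\<forall>\<^sub>F n in sequentially. \<sigma> n \<in> SV V \<and> dS V (\<sigma> n) (curve_of l) < e" if e: "e > 0" for e
    proof -
      have "\<forall>\<^sub>F n in sequentially. \<forall>t\<in>{0..1}. dist (moments (\<sigma> n t)) (l t) < e / (2 * (2 + R))"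
        using l e R_pos unfolding uniform_limit_iff by simp
      then show ?thesis
      proof eventually_elim
        case (elim n)
        have "dS V (\<sigma> n) (curve_of l) \<le> (2 + R) * (e / (2 * (2 + R)))"
          using elim by (intro dS_curve_of_le[OF \<sigma>_SV l_cont l_cone]) (simp add: less_imp_le)
        also have "\<dots> = e / 2"
          using R_pos by (simp add: field_simps)
        also have "\<dots> < e"
          using e by simp
        finally show ?case
          using \<sigma>_SV by simp
      qed
    qed
    then show ?thesis
      unfolding SV.limitin_metric using curve_of_in_SV[OF l_cont l_cone] by blast
  qed
  then show ?thesis
    unfolding SV.mcomplete_def by blast
qed

lemma separable_space_SV:
  assumes "convex V"
  shows "separable_space (Metric_space.mtopology (SV V) (dS V))"
proof -
  interpret SV: Metric_space "SV V" "dS V"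
    by (rule Metric_space_SV)
  obtain Q where Q: "countable Q" "Q \<subseteq> moment_cone" "moment_cone \<subseteq> closure Q"
    using separable by blast
  define I where "I = {(n, qs). length qs = Suc n \<and> set qs \<subseteq> Q}"
  define D where "D = (\<lambda>(n, qs). curve_of (interpolate n qs)) ` I"
  have interpolate_cone: "interpolate n qs ` {0..1} \<subseteq> moment_cone" if "(n, qs) \<in> I" for n qs
    using that Q(2) interpolate_in_convex[OF convex_moment_cone[OF assms]] by (auto simp: I_def)
  have D_SV: "D \<subseteq> SV V"
    using interpolate_cone curve_of_in_SV[OF continuous_on_interpolate] by (auto simp: D_def)
  have "countable I"
  proof (rule countable_subset)
    show "I \<subseteq> UNIV \<times> lists Q"
      by (auto simp: I_def)
    show "countable (UNIV \<times> lists Q :: (nat \<times> _) set)"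
      using Q(1) by simp
  qed
  then have "countable D"
    unfolding D_def by (rule countable_image)
  have dense: "\<exists>\<rho>'\<in>D. dS V \<rho> \<rho>' < r" if \<rho>: "\<rho> \<in> SV V" and r: "r > 0" for \<rho> r
  proof -
    have "(\<lambda>t. moments (\<rho> t)) ` {0..1} \<subseteq> closure Q"
    proof (rule image_subsetI)
      fix t :: real assume "t \<in> {0..1}"
      then show "moments (\<rho> t) \<in> closure Q"
        using Q(3) moments_in_cone[OF SV_in_CV[OF \<rho>]] by blast
    qed
    moreover have "r / (2 * (2 + R)) > 0"
      using r R_pos by simp
    ultimately obtain qs n where "length qs = Suc n" "set qs \<subseteq> Q"
      and approx: "\<And>t. t \<in> {0..1} \<Longrightarrow> dist (moments (\<rho> t)) (interpolate n qs t) \<le> r / (2 * (2 + R))"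
      by (rule uniform_approximation_by_interpolation[OF continuous_on_moments_SV[OF \<rho>]]) blast
    then have nqs: "(n, qs) \<in> I"
      by (simp add: I_def)
    have "dS V \<rho> (curve_of (interpolate n qs)) \<le> (2 + R) * (r / (2 * (2 + R)))"
      using approx by (rule dS_curve_of_le[OF \<rho> continuous_on_interpolate interpolate_cone[OF nqs]])
    also have "\<dots> = r / 2"
      using R_pos by (simp add: field_simps)
    also have "\<dots> < r"
      using r by simp
    finally have "dS V \<rho> (curve_of (interpolate n qs)) < r" .
    moreover have "curve_of (interpolate n qs) \<in> D"
      unfolding D_def using nqs by (rule image_eqI[rotated]) simp
    ultimately show ?thesis
      by blast
  qed
  have "SV.mtopology closure_of D = SV V"
    unfolding SV.metric_closure_of using dense D_SV by (auto simp: subset_iff)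
  then show ?thesis
    unfolding separable_space_def using \<open>countable D\<close> D_SV by auto
qed

end

theorem proposition3p6:
  fixes \<Omega> :: "'a::euclidean_space set"
  assumes "open \<Omega>" and "connected \<Omega>" and "bounded \<Omega>" and "\<Omega> \<noteq> {}"
  shows "Metric_space (SV (closure \<Omega>)) (dS (closure \<Omega>))
       \<and> Metric_space.mcomplete (SV (closure \<Omega>)) (dS (closure \<Omega>))
       \<and> (convex (closure \<Omega>) \<longrightarrow>
            separable_space (Metric_space.mtopology (SV (closure \<Omega>)) (dS (closure \<Omega>))))"
proof -
  obtain R where "R > 0" "\<And>x. x \<in> closure \<Omega> \<Longrightarrow> norm x \<le> R"
    using assms(3) bounded_closure bounded_pos by metis
  then interpret dirac_cone "closure \<Omega>" R
    using assms(3,4) by unfold_locales (auto simp: compact_closure)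
  show ?thesis
    using Metric_space_SV mcomplete_SV separable_space_SV by blast
qed

end
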